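(* For every bad normalized fully ternary string $s\neq 0212$ of length $n$ ending in $2$, $d_{\rm s}(s)=n-2$.
   Context: Strings are finite words over $\{0,1,2,\dots\}$. A string is \emph{normalized} if no two adjacent symbols are equal; the \emph{normalization} of a string replaces every maximal run of identical symbols by a single copy. A string is \emph{fully $k$-ary} if the set of symbols occurring in it is exactly $\{0,\dots,k-1\}$; fully ternary means fully $3$-ary. For a normalized string $s=s_1\cdots s_n$ and $1\le i\le n$, the flip $f^{(i)}(s)$ is the normalization of $s_i\cdots s_1 s_{i+1}\cdots s_n$. The sorting distance $d_{\rm s}(s)$ of a normalized fully ternary string is the minimum number of flips needed to transform $s$ into $012$. Regular-expression notation: $w^i$ is $i$ repetitions of $w$, $w^*$ is zero or more, $w^+$ one or more, $w^{\ge 2}$ two or more repetitions; $\{a,b\}$ denotes a single symbol that is either $a$ or $b$ (chosen independently at each occurrence). A normalized fully ternary string ending in $2$ is \emph{bad} (for sorting; no relabelling allowed) if it is of one of the following types: (I) $0(12)^{\ge 2}$; (II) $(\{0,1\}2)^+$ or $2(\{0,1\}2)^+$; (III) $(\{1,2\}0)^+2$ or $0(\{1,2\}0)^+2$; (IV) $(\{1,2\}0)^+12$ or $(0\{1,2\})^+012$, in either case containing at least two occurrences of $2$; (V) $(01)^*0212$ or $(10)^+212$; (VI) $1(20)^+1(20)^*2$ or $0(21)^+0(21)^*2$; (VII) $1(02)^+1(02)^+$; (VIII) $1(02)^+12$; (IX) one of the following 77 strings: 210212, 021012, 212012, 120102, 201202, 0210202, 1021202, 0212012, 2120102, 0102102,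 1212012, 2010212, 0120212, 1201012, 1201212, 2012012, 10210212, 21021212, 02102012, 02101212, 10212012, 02121012, 02120102, 10102102, 02010212, 21202012, 21201012, 21201202, 20210212, 01021202, 01020212, 20212012, 12120102, 12010212, 12010202, 20120102, 12012012, 021021202, 102120102, 102010212, 021202012, 021201012, 020210212, 101020212, 020212012, 212010202, 212012012, 010210212, 010210202, 010212012, 202010212, 121202012, 121201202, 201021202, 120212012, 012021212, 120102012, 201202012, 120120212, 201201012, 0210212012, 1021202012, 1021201012, 1020210212, 1010210202, 0202010212, 2120202012, 2120102012, 2021021212, 2010212012, 1201021202, 1201202012, 10202010212, 02120102012, 02021021212, 21201202012, 12120202012. All other normalized fully ternary strings ending in $2$ are \emph{good}. *)

theory Defs
  imports Main
begin

definition normalized :: "nat list \<Rightarrow> bool" where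
  "normalized s \<longleftrightarrow> (\<forall>i. Suc i < length s \<longrightarrow> s ! i \<noteq> s ! Suc i)"

definition normalization :: "nat list \<Rightarrow> nat list" where
  "normalization s = remdups_adj s"

definition fully_kary :: "nat \<Rightarrow> nat list \<Rightarrow> bool" where
  "fully_kary k s \<longleftrightarrow> set s = {0..<k}"

definition fully_ternary :: "nat list \<Rightarrow> bool" where
  "fully_ternary s \<longleftrightarrow> fully_kary 3 s"

definition flip :: "nat \<Rightarrow> nat list \<Rightarrow> nat list" where
  "flip i s = normalization (rev (take i s) @ drop i s)"

definition flip_step :: "nat list \<Rightarrow> nat list \<Rightarrow> bool" where
  "flip_step s t \<longleftrightarrow> (\<exists>i. 1 \<le> i \<and> i \<le> length s \<and> t = flip i s)"

definition sorting_distance :: "nat list \<Rightarrow> nat" where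
  "sorting_distance s = (LEAST k. (flip_step ^^ k) s [0,1,2])"

text \<open>Regular-expression style repetition: concatenations of at least m words from L.
  reps L 0 = L^*, reps L 1 = L^+, reps L 2 = L^{>=2}.\<close>
definition reps :: "nat list set \<Rightarrow> nat \<Rightarrow> nat list set" where
  "reps L m = {concat ws | ws. set ws \<subseteq> L \<and> m \<le> length ws}"

definition count2 :: "nat list \<Rightarrow> nat" where
  "count2 s = length (filter (\<lambda>x. x = 2) s)"

definition typeI :: "nat list \<Rightarrow> bool" where
  "typeI s \<longleftrightarrow> (\<exists>w \<in> reps {[1,2]} 2. s = [0] @ w)"

definition typeII :: "nat list \<Rightarrow> bool" where
  "typeII s \<longleftrightarrow> (\<exists>w \<in> reps {[0,2],[1,2]} 1. s = w \<or> s = [2] @ w)"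

definition typeIII :: "nat list \<Rightarrow> bool" where
  "typeIII s \<longleftrightarrow> (\<exists>w \<in> reps {[1,0],[2,0]} 1. s = w @ [2] \<or> s = [0] @ w @ [2])"

definition typeIV :: "nat list \<Rightarrow> bool" where
  "typeIV s \<longleftrightarrow> 2 \<le> count2 s \<and>
     ((\<exists>w \<in> reps {[1,0],[2,0]} 1. s = w @ [1,2]) \<or>
      (\<exists>w \<in> reps {[0,1],[0,2]} 1. s = w @ [0,1,2]))"

definition typeV :: "nat list \<Rightarrow> bool" where
  "typeV s \<longleftrightarrow> (\<exists>w \<in> reps {[0,1]} 0. s = w @ [0,2,1,2]) \<or>
                (\<exists>w \<in> reps {[1,0]} 1. s = w @ [2,1,2])"

definition typeVI :: "nat list \<Rightarrow> bool" where
  "typeVI s \<longleftrightarrow>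
     (\<exists>w \<in> reps {[2,0]} 1. \<exists>v \<in> reps {[2,0]} 0. s = [1] @ w @ [1] @ v @ [2]) \<or>
     (\<exists>w \<in> reps {[2,1]} 1. \<exists>v \<in> reps {[2,1]} 0. s = [0] @ w @ [0] @ v @ [2])"

definition typeVII :: "nat list \<Rightarrow> bool" where
  "typeVII s \<longleftrightarrow> (\<exists>w \<in> reps {[0,2]} 1. \<exists>v \<in> reps {[0,2]} 1. s = [1] @ w @ [1] @ v)"

definition typeVIII :: "nat list \<Rightarrow> bool" where
  "typeVIII s \<longleftrightarrow> (\<exists>w \<in> reps {[0,2]} 1. s = [1] @ w @ [1,2])"

definition exceptional_strings :: "nat list list" where
  "exceptional_strings = [
    [2,1,0,2,1,2],
    [0,2,1,0,1,2],
    [2,1,2,0,1,2],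
    [1,2,0,1,0,2],
    [2,0,1,2,0,2],
    [0,2,1,0,2,0,2],
    [1,0,2,1,2,0,2],
    [0,2,1,2,0,1,2],
    [2,1,2,0,1,0,2],
    [0,1,0,2,1,0,2],
    [1,2,1,2,0,1,2],
    [2,0,1,0,2,1,2],
    [0,1,2,0,2,1,2],
    [1,2,0,1,0,1,2],
    [1,2,0,1,2,1,2],
    [2,0,1,2,0,1,2],
    [1,0,2,1,0,2,1,2],
    [2,1,0,2,1,2,1,2],
    [0,2,1,0,2,0,1,2],
    [0,2,1,0,1,2,1,2],
    [1,0,2,1,2,0,1,2],
    [0,2,1,2,1,0,1,2],
    [0,2,1,2,0,1,0,2],
    [1,0,1,0,2,1,0,2],
    [0,2,0,1,0,2,1,2],
    [2,1,2,0,2,0,1,2],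
    [2,1,2,0,1,0,1,2],
    [2,1,2,0,1,2,0,2],
    [2,0,2,1,0,2,1,2],
    [0,1,0,2,1,2,0,2],
    [0,1,0,2,0,2,1,2],
    [2,0,2,1,2,0,1,2],
    [1,2,1,2,0,1,0,2],
    [1,2,0,1,0,2,1,2],
    [1,2,0,1,0,2,0,2],
    [2,0,1,2,0,1,0,2],
    [1,2,0,1,2,0,1,2],
    [0,2,1,0,2,1,2,0,2],
    [1,0,2,1,2,0,1,0,2],
    [1,0,2,0,1,0,2,1,2],
    [0,2,1,2,0,2,0,1,2],
    [0,2,1,2,0,1,0,1,2],
    [0,2,0,2,1,0,2,1,2],
    [1,0,1,0,2,0,2,1,2],
    [0,2,0,2,1,2,0,1,2],
    [2,1,2,0,1,0,2,0,2],
    [2,1,2,0,1,2,0,1,2],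
    [0,1,0,2,1,0,2,1,2],
    [0,1,0,2,1,0,2,0,2],
    [0,1,0,2,1,2,0,1,2],
    [2,0,2,0,1,0,2,1,2],
    [1,2,1,2,0,2,0,1,2],
    [1,2,1,2,0,1,2,0,2],
    [2,0,1,0,2,1,2,0,2],
    [1,2,0,2,1,2,0,1,2],
    [0,1,2,0,2,1,2,1,2],
    [1,2,0,1,0,2,0,1,2],
    [2,0,1,2,0,2,0,1,2],
    [1,2,0,1,2,0,2,1,2],
    [2,0,1,2,0,1,0,1,2],
    [0,2,1,0,2,1,2,0,1,2],
    [1,0,2,1,2,0,2,0,1,2],
    [1,0,2,1,2,0,1,0,1,2],
    [1,0,2,0,2,1,0,2,1,2],
    [1,0,1,0,2,1,0,2,0,2],
    [0,2,0,2,0,1,0,2,1,2],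
    [2,1,2,0,2,0,2,0,1,2],
    [2,1,2,0,1,0,2,0,1,2],
    [2,0,2,1,0,2,1,2,1,2],
    [2,0,1,0,2,1,2,0,1,2],
    [1,2,0,1,0,2,1,2,0,2],
    [1,2,0,1,2,0,2,0,1,2],
    [1,0,2,0,2,0,1,0,2,1,2],
    [0,2,1,2,0,1,0,2,0,1,2],
    [0,2,0,2,1,0,2,1,2,1,2],
    [2,1,2,0,1,2,0,2,0,1,2],
    [1,2,1,2,0,2,0,2,0,1,2]]"

definition typeIX :: "nat list \<Rightarrow> bool" where
  "typeIX s \<longleftrightarrow> s \<in> set exceptional_strings"

definition bad :: "nat list \<Rightarrow> bool" where
  "bad s \<longleftrightarrow> normalized s \<and> fully_ternary s \<and> s \<noteq> [] \<and> last s = 2 \<and>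
     (typeI s \<or> typeII s \<or> typeIII s \<or> typeIV s \<or> typeV s \<or> typeVI s \<or>
      typeVII s \<or> typeVIII s \<or> typeIX s)"

end

theory Submission
  imports Defs
begin

(*
  A flip of a normalized string either reverses a prefix and keeps the length, or, when the
  symbol after the prefix equals the first symbol, merges the two and shortens the string by
  one (shrink).  So sorting a string of length n into 012 takes at least n - 3 flips.

  Upper bound: shrink while the first symbol repeats; once it does not, the string is a w with
  w alternating between the two other symbols, and such strings are sorted in n - 2 flips along
  explicit chains of shrinks.

  Lower bound: shrinking keeps a bad string bad, and 012 is not bad.  Hence a sorting sequence
  for a bad string contains a flip that keeps the length, and takes at least n - 2 flips.
  Types I-VIII are rewritten as positional patterns for this; the 77 exceptional strings are
  checked by evaluation.
*)

section \<open>Flips of normalized strings\<close>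

lemma normalized_iff_distinct_adj: "normalized s \<longleftrightarrow> distinct_adj s"
  by (simp add: normalized_def distinct_adj_conv_nth)

lemma fully_ternary_iff: "fully_ternary s \<longleftrightarrow> set s = {0,1,2}"
proof -
  have "{0..<3::nat} = {0,1,2}" by auto
  then show ?thesis by (simp add: fully_ternary_def fully_kary_def)
qed

lemma fully_ternary_length: "fully_ternary s \<Longrightarrow> 3 \<le> length s"
  using card_length[of s] by (simp add: fully_ternary_iff)

lemma remdups_adj_append_Cons_Cons:
  "remdups_adj (xs @ x # x # ys) = remdups_adj (xs @ x # ys)"
  by (metis remdups_adj.simps(3) remdups_adj_append)

definition prefix_reversal :: "nat \<Rightarrow> 'a list \<Rightarrow> 'a list" where
  "prefix_reversal i s = rev (take i s) @ drop i s"

lemma length_prefix_reversal [simp]: "length (prefix_reversal i s) = length s"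
  by (simp add: prefix_reversal_def)

lemma set_prefix_reversal [simp]: "set (prefix_reversal i s) = set s"
  by (metis prefix_reversal_def append_take_drop_id set_append set_rev)

lemma distinct_adj_prefix_reversal:
  assumes "distinct_adj s" and "0 < i \<Longrightarrow> i < length s \<Longrightarrow> s ! i \<noteq> s ! 0"
  shows "distinct_adj (prefix_reversal i s)"
proof -
  have "distinct_adj (take i s)" "distinct_adj (drop i s)"
    using assms(1) append_take_drop_id[of i s]
    by (metis distinct_adj_appendD1 distinct_adj_appendD2)+
  moreover have "take i s = [] \<or> drop i s = [] \<or> last (rev (take i s)) \<noteq> hd (drop i s)"
    using assms(2) by (auto simp: last_rev hd_take hd_drop_conv_nth hd_conv_nth)
  ultimately show ?thesis
    by (simp add: prefix_reversal_def distinct_adj_append_iff)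
qed

definition shrink :: "nat \<Rightarrow> 'a list \<Rightarrow> 'a list" where
  "shrink i s = prefix_reversal (i - 1) (tl s)"

lemma flip_normalized:
  assumes "normalized s" "1 \<le> i" "i \<le> length s"
  shows "flip i s = (if i < length s \<and> s ! i = s ! 0 then shrink i s else prefix_reversal i s)"
proof (cases "i < length s \<and> s ! i = s ! 0")
  case True
  obtain a t where s: "s = a # t" using assms(2,3) by (cases s) auto
  obtain j where j: "i = Suc j" using assms(2) by (cases i) auto
  have jt: "j < length t" "t ! j = a" using True s j by auto
  have dt: "distinct_adj (a # t)" using assms(1) s normalized_iff_distinct_adj by simp
  have drop: "drop j t = a # drop (Suc j) t"
    using Cons_nth_drop_Suc[OF jt(1)] jt(2) by simp
  have "flip i s = remdups_adj (rev (take j t) @ a # a # drop (Suc j) t)"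
    by (simp add: flip_def normalization_def prefix_reversal_def s j drop)
  also have "\<dots> = remdups_adj (shrink i s)"
    by (simp add: remdups_adj_append_Cons_Cons shrink_def prefix_reversal_def s j drop)
  finally have "flip i s = remdups_adj (shrink i s)" .
  moreover have "distinct_adj (shrink i s)"
    unfolding shrink_def s j list.sel diff_Suc_1
  proof (rule distinct_adj_prefix_reversal)
    show "distinct_adj t" using dt by (rule distinct_adj_ConsD)
    show "t ! j \<noteq> t ! 0" if "0 < j" using dt jt that by (cases t) auto
  qed
  ultimately show ?thesis using True by (simp add: distinct_adj_altdef)
next
  case False
  have "distinct_adj (prefix_reversal i s)"
    using assms False normalized_iff_distinct_adj distinct_adj_prefix_reversal by blast
  then show ?thesis
    using False
    by (simp only: flip_def normalization_def prefix_reversal_def distinct_adj_altdef if_False)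
qed

lemma normalized_flip [simp]: "normalized (flip i s)"
  by (simp add: flip_def normalization_def normalized_iff_distinct_adj)

lemma length_flip:
  "normalized s \<Longrightarrow> 1 \<le> i \<Longrightarrow> i \<le> length s \<Longrightarrow>
    length (flip i s) = (if i < length s \<and> s ! i = s ! 0 then length s - 1 else length s)"
  by (simp add: flip_normalized shrink_def)

lemma length_shrink [simp]: "length (shrink i s) = length s - 1"
  by (simp add: shrink_def)

lemma set_shrink: "set (shrink i s) = set (tl s)"
  by (simp add: shrink_def)

lemma last_shrink: "1 \<le> i \<Longrightarrow> i < length s \<Longrightarrow> last (shrink i s) = last s"
  by (cases s) (auto simp: shrink_def prefix_reversal_def last_drop)

lemma nth_shrink:
  assumes "i < length s" "k < length s - 1"
  shows "shrink i s ! k = s ! (if k < i - 1 then i - 1 - k else k + 1)"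
  using assms by (cases s) (auto simp: shrink_def prefix_reversal_def nth_append rev_nth min_def)

lemma set_tl_eq_set:
  "1 \<le> i \<Longrightarrow> i < length s \<Longrightarrow> s ! i = s ! 0 \<Longrightarrow> set (tl s) = set s"
  by (cases s) (auto simp: nth_Cons' split: if_splits intro!: nth_mem)

lemma normalized_shrink:
  "normalized s \<Longrightarrow> 1 \<le> i \<Longrightarrow> i < length s \<Longrightarrow> s ! i = s ! 0 \<Longrightarrow> normalized (shrink i s)"
  using normalized_flip[of i s] flip_normalized[of s i] by simp

lemma shrink_invariants:
  assumes "normalized s" "fully_ternary s" "last s = 2" "1 \<le> i" "i < length s" "s ! i = s ! 0"
  shows "normalized (shrink i s)" "fully_ternary (shrink i s)" "last (shrink i s) = 2"
  using normalized_shrink[OF assms(1,4-6)] assms(2-6)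
  by (simp_all add: fully_ternary_iff set_shrink set_tl_eq_set last_shrink)

lemma first_symbol_repeats:
  assumes "hd s \<in> set (tl s)"
  obtains i where "1 \<le> i" "i < length s" "s ! i = s ! 0"
proof -
  obtain j where "j < length (tl s)" "tl s ! j = hd s" using assms by (metis in_set_conv_nth)
  moreover have "s \<noteq> []" using assms by auto
  ultimately show thesis by (intro that[of "Suc j"]) (auto simp: nth_tl hd_conv_nth)
qed

definition sorts_in :: "nat \<Rightarrow> nat list \<Rightarrow> bool" where
  "sorts_in k s \<longleftrightarrow> (flip_step ^^ k) s [0,1,2]"

lemma sorts_in_0 [simp]: "sorts_in 0 s \<longleftrightarrow> s = [0,1,2]"
  by (simp add: sorts_in_def)

lemma sorts_in_Suc_iff:
  "sorts_in (Suc k) s \<longleftrightarrow> (\<exists>i. 1 \<le> i \<and> i \<le> length s \<and> sorts_in k (flip i s))"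
proof
  assume "sorts_in (Suc k) s"
  then have "\<exists>t. flip_step s t \<and> (flip_step ^^ k) t [0,1,2]"
    unfolding sorts_in_def by (rule relpowp_Suc_D2)
  then show "\<exists>i. 1 \<le> i \<and> i \<le> length s \<and> sorts_in k (flip i s)"
    by (auto simp: flip_step_def sorts_in_def)
next
  assume "\<exists>i. 1 \<le> i \<and> i \<le> length s \<and> sorts_in k (flip i s)"
  then obtain i where "flip_step s (flip i s)" "sorts_in k (flip i s)"
    by (auto simp: flip_step_def)
  then show "sorts_in (Suc k) s" unfolding sorts_in_def by (rule relpowp_Suc_I2)
qed

lemma sorts_in_shrink:
  assumes "normalized s" "1 \<le> i" "i < length s" "s ! i = s ! 0" "sorts_in k (shrink i s)"
  shows "sorts_in (Suc k) s"
  using flip_normalized[OF assms(1,2)] assms unfolding sorts_in_Suc_iff by (intro exI[of _ i]) simp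

lemma sorts_in_prefix_reversal:
  assumes "normalized s" "1 \<le> i" "i < length s" "s ! i \<noteq> s ! 0"
    "sorts_in k (prefix_reversal i s)"
  shows "sorts_in (Suc k) s"
  using flip_normalized[OF assms(1,2)] assms unfolding sorts_in_Suc_iff by (intro exI[of _ i]) simp

fun flip_search :: "nat \<Rightarrow> nat list \<Rightarrow> bool" where
  "flip_search 0 s \<longleftrightarrow> s = [0,1,2]"
| "flip_search (Suc k) s \<longleftrightarrow> (\<exists>i\<in>set [1..<Suc (length s)]. flip_search k (flip i s))"

lemma flip_search_sound: "flip_search k s \<Longrightarrow> sorts_in k s"
  by (induction k arbitrary: s) (auto simp: sorts_in_Suc_iff)

section \<open>Sorting in n - 2 flips\<close>

definition repeat :: "nat \<Rightarrow> 'a list \<Rightarrow> 'a list" where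
  "repeat k w = concat (replicate k w)"

lemma repeat_0 [simp]: "repeat 0 w = []"
  and repeat_Suc [simp]: "repeat (Suc k) w = w @ repeat k w"
  by (simp_all add: repeat_def)

lemma Cons_repeat_swap: "x # repeat k [y, x] = repeat k [x, y] @ [x]"
  by (induction k) auto

lemma length_repeat [simp]: "length (repeat k w) = k * length w"
  by (induction k) auto

lemma repeat_two_letters:
  assumes "distinct_adj w" "set w \<subseteq> {a, b}" "a \<noteq> b" "w \<noteq> []" "last w = b"
  shows "(\<exists>k. w = repeat k [a, b]) \<or> (\<exists>k. w = b # repeat k [a, b])"
  using assms
proof (induction w)
  case (Cons x w)
  show ?case
  proof (cases "w = []")
    case True
    then show ?thesis using Cons.prems by (auto intro: exI[of _ 0])
  next
    case False
    then have "x \<noteq> hd w" "distinct_adj w" using Cons.prems(1) by (simp_all add: distinct_adj_Cons)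
    moreover have "set w \<subseteq> {a, b}" "last w = b" using Cons.prems(2,5) False by auto
    ultimately have "(\<exists>k. w = repeat k [a, b]) \<or> (\<exists>k. w = b # repeat k [a, b])"
      using Cons.IH Cons.prems(3) False by blast
    with \<open>x \<noteq> hd w\<close> show ?thesis
    proof (elim disjE exE)
      fix k assume "x \<noteq> hd w" "w = repeat k [a, b]"
      then obtain k' where "w = a # b # repeat k' [a, b]" "x = b"
        using False Cons.prems(2) by (cases k) auto
      then have "x # w = b # repeat (Suc k') [a, b]" by simp
      then show ?thesis by blast
    next
      fix k assume "x \<noteq> hd w" "w = b # repeat k [a, b]"
      then have "x # w = repeat (Suc k) [a, b]" using Cons.prems(2) by auto
      then show ?thesis by blast
    qed
  qed
qed simp

(* Shrinking at position 3 links pre20 (k + 1) \<rightarrow> pre10 k \<rightarrow> pre20 k and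
   pre21 (k + 1) \<rightarrow> pre01 k \<rightarrow> pre21 k; their members of length n sort in n - 3 flips. *)
definition pre20 :: "nat \<Rightarrow> nat list" where "pre20 k = [2,0] @ repeat k [1,2]"
definition pre10 :: "nat \<Rightarrow> nat list" where "pre10 k = [1,0] @ repeat k [2,1] @ [2]"
definition pre21 :: "nat \<Rightarrow> nat list" where "pre21 k = [2,1] @ repeat k [0,2]"
definition pre01 :: "nat \<Rightarrow> nat list" where "pre01 k = [0,1] @ repeat k [2,0] @ [2]"

lemma distinct_adj_Cons_repeat:
  "a \<noteq> b \<Longrightarrow> distinct_adj (x # repeat k [a, b] @ ys) \<longleftrightarrow>
     (if k = 0 then distinct_adj (x # ys) else x \<noteq> a \<and> distinct_adj (b # ys))"
  by (induction k arbitrary: x) auto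

lemma distinct_adj_Cons_repeat_Nil:
  "a \<noteq> b \<Longrightarrow> distinct_adj (x # repeat k [a, b]) \<longleftrightarrow> k = 0 \<or> x \<noteq> a"
  by (induction k arbitrary: x) auto

lemma normalized_pre20: "normalized (pre20 k)"
  and normalized_pre10: "normalized (pre10 k)"
  and normalized_pre21: "normalized (pre21 k)"
  and normalized_pre01: "normalized (pre01 k)"
  by (simp_all add: pre20_def pre10_def pre21_def pre01_def normalized_iff_distinct_adj
      distinct_adj_Cons_repeat distinct_adj_Cons_repeat_Nil)

lemma shrink_pre20: "shrink 3 (pre20 (Suc k)) = pre10 k"
  and shrink_pre21: "shrink 3 (pre21 (Suc k)) = pre01 k"
  by (simp_all add: shrink_def prefix_reversal_def pre20_def pre10_def pre21_def pre01_def
      numeral_eq_Suc Cons_repeat_swap)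

lemma shrink_pre10: "shrink 3 (pre10 (Suc k)) = pre20 (Suc k)"
  and shrink_pre01: "shrink 3 (pre01 (Suc k)) = pre21 (Suc k)"
  by (simp_all add: shrink_def prefix_reversal_def pre20_def pre10_def pre21_def pre01_def
      numeral_eq_Suc Cons_repeat_swap[symmetric])

lemma sorts_in_pre20_pre10:
  "2 \<le> k \<Longrightarrow> sorts_in (2 * k - 1) (pre20 k) \<and> sorts_in (2 * k) (pre10 k)"
proof (induction k rule: dec_induct)
  case base
  show ?case
    by (intro conjI flip_search_sound; unfold pre20_def pre10_def repeat_def; code_simp)
next
  case (step k)
  have pre20: "sorts_in (Suc (2 * k)) (pre20 (Suc k))"
  proof (rule sorts_in_shrink[where i = 3, OF normalized_pre20])
    show "sorts_in (2 * k) (shrink 3 (pre20 (Suc k)))" using step.IH by (simp only: shrink_pre20)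
  qed (simp_all add: pre20_def numeral_eq_Suc)
  have "sorts_in (Suc (Suc (2 * k))) (pre10 (Suc k))"
  proof (rule sorts_in_shrink[where i = 3, OF normalized_pre10])
    show "sorts_in (Suc (2 * k)) (shrink 3 (pre10 (Suc k)))"
      using pre20 by (simp only: shrink_pre10)
  qed (simp_all add: pre10_def numeral_eq_Suc)
  with pre20 show ?case by simp
qed

lemma sorts_in_pre21_pre01:
  "1 \<le> k \<Longrightarrow> sorts_in (2 * k - 1) (pre21 k) \<and> sorts_in (2 * k) (pre01 k)"
proof (induction k rule: dec_induct)
  case base
  show ?case
    by (intro conjI flip_search_sound; unfold pre21_def pre01_def repeat_def; code_simp)
next
  case (step k)
  have pre21: "sorts_in (Suc (2 * k)) (pre21 (Suc k))"
  proof (rule sorts_in_shrink[where i = 3, OF normalized_pre21])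
    show "sorts_in (2 * k) (shrink 3 (pre21 (Suc k)))" using step.IH by (simp only: shrink_pre21)
  qed (simp_all add: pre21_def numeral_eq_Suc)
  have "sorts_in (Suc (Suc (2 * k))) (pre01 (Suc k))"
  proof (rule sorts_in_shrink[where i = 3, OF normalized_pre01])
    show "sorts_in (Suc (2 * k)) (shrink 3 (pre01 (Suc k)))"
      using pre21 by (simp only: shrink_pre01)
  qed (simp_all add: pre01_def numeral_eq_Suc)
  with pre21 show ?case by simp
qed

lemma sorts_in_0_12: "1 \<le> k \<Longrightarrow> sorts_in (2 * k - 1) (0 # repeat k [1,2])"
proof -
  assume "1 \<le> k"
  then consider "k = 1" | "k = 2" | k' where "k = Suc k'" "2 \<le> k'"
    by (metis One_nat_def Suc_le_D le_Suc_eq not_less_eq_eq numeral_2_eq_2)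
  then show ?thesis
  proof cases
    case 1
    show ?thesis by (rule flip_search_sound) (simp add: 1, code_simp)
  next
    case 2
    show ?thesis by (rule flip_search_sound) (simp add: 2 repeat_def, code_simp)
  next
    case 3
    have "sorts_in (Suc (2 * k')) (0 # repeat k [1,2])"
    proof (rule sorts_in_prefix_reversal[where i = 2])
      show "sorts_in (2 * k') (prefix_reversal 2 (0 # repeat k [1,2]))"
        using sorts_in_pre20_pre10 3
        by (simp add: prefix_reversal_def pre10_def numeral_eq_Suc Cons_repeat_swap)
    qed (simp_all add: 3 normalized_iff_distinct_adj distinct_adj_Cons_repeat_Nil numeral_eq_Suc)
    then show ?thesis using 3 by simp
  qed
qed

lemma sorts_in_0_2_12: "2 \<le> k \<Longrightarrow> sorts_in (2 * k) (0 # 2 # repeat k [1,2])"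
proof -
  assume k: "2 \<le> k"
  then obtain k' where k': "k = Suc k'" by (cases k) auto
  have "sorts_in (Suc (2 * k - 1)) (0 # 2 # repeat k [1,2])"
  proof (rule sorts_in_prefix_reversal[where i = 2])
    show "sorts_in (2 * k - 1) (prefix_reversal 2 (0 # 2 # repeat k [1,2]))"
      using sorts_in_pre20_pre10[OF k] by (simp add: prefix_reversal_def pre20_def numeral_eq_Suc)
  qed (simp_all add: k' normalized_iff_distinct_adj distinct_adj_Cons_repeat_Nil numeral_eq_Suc)
  then show ?thesis using k by simp
qed

lemma sorts_in_1_02: "1 \<le> k \<Longrightarrow> sorts_in (2 * k - 1) (1 # repeat k [0,2])"
proof -
  assume "1 \<le> k"
  then obtain k' where k: "k = Suc k'" by (cases k) auto
  have "sorts_in (Suc (2 * k')) (1 # repeat k [0,2])"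
  proof (rule sorts_in_prefix_reversal[where i = 2])
    have "prefix_reversal 2 (1 # repeat k [0,2]) = pre01 k'"
      by (simp add: k prefix_reversal_def pre01_def numeral_eq_Suc Cons_repeat_swap)
    then show "sorts_in (2 * k') (prefix_reversal 2 (1 # repeat k [0,2]))"
      using sorts_in_pre21_pre01[of k'] by (cases k') (auto simp: pre01_def)
  qed (simp_all add: k normalized_iff_distinct_adj distinct_adj_Cons_repeat_Nil numeral_eq_Suc)
  then show ?thesis using k by simp
qed

lemma sorts_in_1_2_02: "1 \<le> k \<Longrightarrow> sorts_in (2 * k) (1 # 2 # repeat k [0,2])"
proof -
  assume k: "1 \<le> k"
  then obtain k' where k': "k = Suc k'" by (cases k) auto
  have "sorts_in (Suc (2 * k - 1)) (1 # 2 # repeat k [0,2])"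
  proof (rule sorts_in_prefix_reversal[where i = 2])
    show "sorts_in (2 * k - 1) (prefix_reversal 2 (1 # 2 # repeat k [0,2]))"
      using sorts_in_pre21_pre01[OF k] by (simp add: prefix_reversal_def pre21_def numeral_eq_Suc)
  qed (simp_all add: k' normalized_iff_distinct_adj distinct_adj_Cons_repeat_Nil numeral_eq_Suc)
  then show ?thesis using k by simp
qed

lemma sorts_in_first_symbol_unique:
  assumes "normalized s" "fully_ternary s" "last s = 2" "s \<noteq> [0,2,1,2]" "hd s \<notin> set (tl s)"
  shows "sorts_in (length s - 2) s"
proof -
  obtain a w where s: "s = a # w" using assms(2) by (cases s) (auto simp: fully_ternary_iff)
  have "w \<noteq> []" using assms(2,5) s by (auto simp: fully_ternary_iff)
  then have w: "distinct_adj w" "w \<noteq> []" "last w = 2" "set w = {0,1,2} - {a}"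
    using assms s by (auto simp: normalized_iff_distinct_adj fully_ternary_iff distinct_adj_Cons)
  then have "a \<in> {0,1}" using last_in_set[of w] assms(2) s by (auto simp: fully_ternary_iff)
  then consider "a = 0" "set w \<subseteq> {1,2}" | "a = 1" "set w \<subseteq> {0,2}" using w(4) by auto
  then show ?thesis
  proof cases
    case 1
    then consider k where "w = repeat k [1,2]" | k where "w = 2 # repeat k [1,2]"
      using repeat_two_letters[OF w(1) _ _ w(2,3), of 1] by auto
    then show ?thesis
    proof cases
      case (1 k)
      then show ?thesis using sorts_in_0_12[of k] \<open>a = 0\<close> s w(2) by (cases k) (auto simp: mult_2)
    next
      case (2 k)
      moreover have "1 \<in> set w" using w(4) \<open>a = 0\<close> by auto
      then have "k \<noteq> 0" using 2 by (cases k) simp_all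
      moreover have "k \<noteq> 1" using 2 assms(4) s \<open>a = 0\<close> by auto
      ultimately show ?thesis using sorts_in_0_2_12[of k] \<open>a = 0\<close> s by (simp add: mult_2)
    qed
  next
    case 2
    then consider k where "w = repeat k [0,2]" | k where "w = 2 # repeat k [0,2]"
      using repeat_two_letters[OF w(1) _ _ w(2,3), of 0] by auto
    then show ?thesis
    proof cases
      case (1 k)
      then show ?thesis using sorts_in_1_02[of k] \<open>a = 1\<close> s w(2) by (cases k) (auto simp: mult_2)
    next
      case (2 k)
      moreover have "0 \<in> set w" using w(4) \<open>a = 1\<close> by auto
      then have "k \<noteq> 0" using 2 by (cases k) simp_all
      ultimately show ?thesis using sorts_in_1_2_02[of k] \<open>a = 1\<close> s by (simp add: mult_2)
    qed
  qed
qed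

(* A shrink of a string of length at most 5 may be the exception 0212, so these lengths are
   checked exhaustively. *)
lemma sorts_in_short:
  assumes "normalized s" "fully_ternary s" "last s = 2" "s \<noteq> [0,2,1,2]" "length s \<le> 5"
  shows "sorts_in (length s - 2) s"
proof -
  have check: "\<forall>n\<in>{3,4,5}. \<forall>t\<in>set (List.n_lists n [0,1,2]).
      distinct_adj t \<and> set t = {0,1,2} \<and> last t = 2 \<and> t \<noteq> [0,2,1,2] \<longrightarrow> flip_search (n - 2) t"
    by code_simp
  have "length s \<in> {3,4,5}" using assms(2,5) fully_ternary_length[of s] by auto
  moreover have "s \<in> set (List.n_lists (length s) [0,1,2])"
    using assms(2) by (simp add: set_n_lists fully_ternary_iff)
  moreover have "distinct_adj s \<and> set s = {0,1,2} \<and> last s = 2 \<and> s \<noteq> [0,2,1,2]"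
    using assms by (simp add: normalized_iff_distinct_adj fully_ternary_iff)
  ultimately have "flip_search (length s - 2) s" using check by blast
  then show ?thesis by (rule flip_search_sound)
qed

theorem sorts_in_length_minus_2:
  "normalized s \<Longrightarrow> fully_ternary s \<Longrightarrow> last s = 2 \<Longrightarrow> s \<noteq> [0,2,1,2] \<Longrightarrow>
    sorts_in (length s - 2) s"
proof (induction "length s" arbitrary: s rule: less_induct)
  case less
  show ?case
  proof (cases "length s \<le> 5")
    case True
    with less.prems show ?thesis by (intro sorts_in_short)
  next
    case long: False
    show ?thesis
    proof (cases "hd s \<in> set (tl s)")
      case False
      with less.prems show ?thesis by (intro sorts_in_first_symbol_unique)
    next
      case True
      then obtain i where i: "1 \<le> i" "i < length s" "s ! i = s ! 0" by (rule first_symbol_repeats)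
      have "shrink i s \<noteq> [0,2,1,2]"
      proof
        assume "shrink i s = [0,2,1,2]"
        then have "length (shrink i s) = 4" by simp
        with long show False by simp
      qed
      moreover have "length (shrink i s) < length s" using i(2) by simp
      ultimately have "sorts_in (length (shrink i s) - 2) (shrink i s)"
        using less.hyps shrink_invariants[OF less.prems(1-3) i] by blast
      then have "sorts_in (Suc (length (shrink i s) - 2)) s"
        by (rule sorts_in_shrink[OF less.prems(1) i])
      moreover have "Suc (length (shrink i s) - 2) = length s - 2" using long by simp
      ultimately show ?thesis by simp
    qed
  qed
qed

section \<open>Bad strings as positional patterns\<close>

primrec fits :: "(nat \<Rightarrow> 'a set) \<Rightarrow> 'a list \<Rightarrow> bool" where
  "fits F [] \<longleftrightarrow> True"
| "fits F (x # xs) \<longleftrightarrow> x \<in> F 0 \<and> fits (\<lambda>k. F (Suc k)) xs"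

lemma fits_iff_nth: "fits F s \<longleftrightarrow> (\<forall>k<length s. s ! k \<in> F k)"
  by (induction s arbitrary: F) (auto simp: nth_Cons' less_Suc_eq_0_disj)

lemma fits_append [simp]: "fits F (xs @ ys) \<longleftrightarrow> fits F xs \<and> fits (\<lambda>k. F (length xs + k)) ys"
  by (induction xs arbitrary: F) auto

lemma fits_cong: "(\<And>k. k < length xs \<Longrightarrow> F k = G k) \<Longrightarrow> fits F xs \<longleftrightarrow> fits G xs"
  by (auto simp: fits_iff_nth)

lemma fitsD: "fits F s \<Longrightarrow> k < length s \<Longrightarrow> s ! k \<in> F k"
  by (simp add: fits_iff_nth)

lemma fits_split_at:
  assumes "fits F s" "j < length s" "F j = {c}"
  obtains w v where "s = w @ c # v" "length w = j" "fits F w" "fits (\<lambda>k. F (Suc j + k)) v"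
proof
  show s: "s = take j s @ c # drop (Suc j) s"
    using id_take_nth_drop[OF assms(2)] fitsD[OF assms(1,2)] assms(3) by simp
  show "length (take j s) = j" using assms(2) by simp
  show "fits F (take j s)" "fits (\<lambda>k. F (Suc j + k)) (drop (Suc j) s)"
    using assms(1) s fits_append[of F "take j s" "c # drop (Suc j) s"] assms(2) by auto
qed

lemma fits_between:
  assumes "fits F s" "length u + length v \<le> length s"
    "\<And>k. k < length u \<Longrightarrow> F k = {u ! k}"
    "\<And>k. k < length v \<Longrightarrow> F (length s - length v + k) = {v ! k}"
  shows "\<exists>w. s = u @ w @ v \<and> fits (\<lambda>k. F (length u + k)) w"
proof (intro exI conjI)
  let ?m = "length s - length u - length v"
  let ?w = "take ?m (drop (length u) s)"
  have "take (length u) s = u"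
  proof (rule nth_equalityI)
    fix k assume "k < length (take (length u) s)"
    then show "take (length u) s ! k = u ! k"
      using fitsD[OF assms(1), of k] assms(2) assms(3)[of k] by simp
  qed (use assms(2) in simp)
  moreover have "drop (length u + ?m) s = v"
  proof (rule nth_equalityI)
    fix k assume "k < length (drop (length u + ?m) s)"
    then show "drop (length u + ?m) s ! k = v ! k"
      using fitsD[OF assms(1), of "length s - length v + k"] assms(2) assms(4)[of k] by simp
  qed (use assms(2) in simp)
  ultimately show "s = u @ ?w @ v"
    by (metis append_take_drop_id drop_drop add.commute)
  show "fits (\<lambda>k. F (length u + k)) ?w"
    using assms(1) by (auto simp: fits_iff_nth)
qed

definition alt :: "'a set \<Rightarrow> 'a set \<Rightarrow> nat \<Rightarrow> 'a set" where
  "alt X Y k = (if even k then X else Y)"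

lemma alt_0 [simp]: "alt X Y 0 = X"
  and alt_Suc [simp]: "alt X Y (Suc k) = alt Y X k"
  by (simp_all add: alt_def)

lemma alt_add_even: "even j \<Longrightarrow> alt X Y (j + k) = alt X Y k"
  by (simp add: alt_def)

definition pairs :: "'a set \<Rightarrow> 'a set \<Rightarrow> 'a list set" where
  "pairs X Y = {[x, y] | x y. x \<in> X \<and> y \<in> Y}"

lemma pairs_singletons: "{[a, b]} = pairs {a} {b}"
  and pairs_left: "{[a, c], [b, c]} = pairs {a, b} {c}"
  and pairs_right: "{[a, b], [a, c]} = pairs {a} {b, c}"
  by (auto simp: pairs_def)

lemma concat_pairs:
  "set ws \<subseteq> pairs X Y \<Longrightarrow> length (concat ws) = 2 * length ws \<and> fits (alt X Y) (concat ws)"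
proof (induction ws)
  case (Cons w ws)
  then obtain x y where "w = [x, y]" "x \<in> X" "y \<in> Y" by (auto simp: pairs_def)
  with Cons show ?case by (simp add: alt_add_even[of 2, simplified])
qed simp

lemma fits_alt_concat_pairs:
  "even (length w) \<Longrightarrow> fits (alt X Y) w \<Longrightarrow>
    \<exists>ws. w = concat ws \<and> set ws \<subseteq> pairs X Y \<and> length w = 2 * length ws"
proof (induction w rule: induct_list012)
  case (3 x y zs)
  then obtain ws where "zs = concat ws" "set ws \<subseteq> pairs X Y" "length zs = 2 * length ws"
    by auto
  moreover have "[x, y] \<in> pairs X Y" using "3.prems" by (auto simp: pairs_def)
  ultimately show ?case by (intro exI[of _ "[x, y] # ws"]) auto
qed auto

lemma reps_pairs:
  "w \<in> reps (pairs X Y) m \<longleftrightarrow> even (length w) \<and> 2 * m \<le> length w \<and> fits (alt X Y) w"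
proof
  assume "w \<in> reps (pairs X Y) m"
  then show "even (length w) \<and> 2 * m \<le> length w \<and> fits (alt X Y) w"
    using concat_pairs by (fastforce simp: reps_def)
next
  assume "even (length w) \<and> 2 * m \<le> length w \<and> fits (alt X Y) w"
  then show "w \<in> reps (pairs X Y) m"
    using fits_alt_concat_pairs[of w X Y] by (fastforce simp: reps_def)
qed

(*
  Types I-VIII as positional patterns (pat k is the set of symbols allowed at position k).
  Suffixes a and b refer to the two alternatives of a type, shapeVI a b is type VI with
  (a, b) = (1, 0) or (0, 1), and m is the position of the second a, resp. 1, in types VI and
  VII; it ranges over set [0..<length s] so that the shapes can be evaluated.
*)
definition patI :: "nat \<Rightarrow> nat set" where
  "patI k = (if k = 0 then {0} else alt {2} {1} k)"
definition patIIIa :: "nat \<Rightarrow> nat \<Rightarrow> nat set" where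
  "patIIIa n k = (if k + 1 = n then {2} else alt {1,2} {0} k)"
definition patIIIb :: "nat \<Rightarrow> nat \<Rightarrow> nat set" where
  "patIIIb n k = (if k + 1 = n then {2} else alt {0} {1,2} k)"
definition patIVa :: "nat \<Rightarrow> nat \<Rightarrow> nat set" where
  "patIVa n k = (if k + 1 = n then {2} else if k + 2 = n then {1} else alt {1,2} {0} k)"
definition patIVb :: "nat \<Rightarrow> nat \<Rightarrow> nat set" where
  "patIVb n k = (if k + 1 = n then {2} else if k + 2 = n then {1} else alt {0} {1,2} k)"
definition patVa :: "nat \<Rightarrow> nat \<Rightarrow> nat set" where
  "patVa n k = (if k + 1 = n then {2} else if k + 2 = n then {1} else if k + 3 = n then {2}
     else alt {0} {1} k)"
definition patVb :: "nat \<Rightarrow> nat \<Rightarrow> nat set" where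
  "patVb n k = (if k + 1 = n then {2} else if k + 2 = n then {1} else if k + 3 = n then {2}
     else alt {1} {0} k)"
definition patVI :: "nat \<Rightarrow> nat \<Rightarrow> nat \<Rightarrow> nat \<Rightarrow> nat set" where
  "patVI a b m k = (if k = 0 \<or> k = m then {a} else if k < m then alt {b} {2} k else alt {2} {b} k)"
definition patVII :: "nat \<Rightarrow> nat \<Rightarrow> nat set" where
  "patVII m k = (if k = 0 \<or> k = m then {1} else if k < m then alt {2} {0} k else alt {0} {2} k)"
definition patVIII :: "nat \<Rightarrow> nat \<Rightarrow> nat set" where
  "patVIII n k = (if k = 0 \<or> k + 2 = n then {1} else if k + 1 = n then {2} else alt {2} {0} k)"

definition shapeI :: "nat list \<Rightarrow> bool" where
  "shapeI s \<longleftrightarrow> odd (length s) \<and> 5 \<le> length s \<and> fits patI s"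
definition shapeIIa :: "nat list \<Rightarrow> bool" where
  "shapeIIa s \<longleftrightarrow> even (length s) \<and> 2 \<le> length s \<and> fits (alt {0,1} {2}) s"
definition shapeIIb :: "nat list \<Rightarrow> bool" where
  "shapeIIb s \<longleftrightarrow> odd (length s) \<and> 3 \<le> length s \<and> fits (alt {2} {0,1}) s"
definition shapeIIIa :: "nat list \<Rightarrow> bool" where
  "shapeIIIa s \<longleftrightarrow> odd (length s) \<and> 3 \<le> length s \<and> fits (patIIIa (length s)) s"
definition shapeIIIb :: "nat list \<Rightarrow> bool" where
  "shapeIIIb s \<longleftrightarrow> even (length s) \<and> 4 \<le> length s \<and> fits (patIIIb (length s)) s"
definition shapeIVa :: "nat list \<Rightarrow> bool" where
  "shapeIVa s \<longleftrightarrow>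
    2 \<le> count2 s \<and> even (length s) \<and> 4 \<le> length s \<and> fits (patIVa (length s)) s"
definition shapeIVb :: "nat list \<Rightarrow> bool" where
  "shapeIVb s \<longleftrightarrow>
    2 \<le> count2 s \<and> odd (length s) \<and> 5 \<le> length s \<and> fits (patIVb (length s)) s"
definition shapeVa :: "nat list \<Rightarrow> bool" where
  "shapeVa s \<longleftrightarrow> even (length s) \<and> 4 \<le> length s \<and> fits (patVa (length s)) s"
definition shapeVb :: "nat list \<Rightarrow> bool" where
  "shapeVb s \<longleftrightarrow> odd (length s) \<and> 5 \<le> length s \<and> fits (patVb (length s)) s"
definition shapeVI :: "nat \<Rightarrow> nat \<Rightarrow> nat list \<Rightarrow> bool" where
  "shapeVI a b s \<longleftrightarrow> (\<exists>m\<in>set [0..<length s].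
    odd m \<and> 3 \<le> m \<and> odd (length s) \<and> m + 2 \<le> length s \<and> fits (patVI a b m) s)"
definition shapeVII :: "nat list \<Rightarrow> bool" where
  "shapeVII s \<longleftrightarrow> (\<exists>m\<in>set [0..<length s].
    odd m \<and> 3 \<le> m \<and> even (length s) \<and> m + 3 \<le> length s \<and> fits (patVII m) s)"
definition shapeVIII :: "nat list \<Rightarrow> bool" where
  "shapeVIII s \<longleftrightarrow> odd (length s) \<and> 5 \<le> length s \<and> fits (patVIII (length s)) s"

lemma typeI_iff_shape: "typeI s \<longleftrightarrow> shapeI s"
proof -
  have "fits (\<lambda>k. patI (Suc k)) w \<longleftrightarrow> fits (alt {1} {2}) w" for w
    by (rule fits_cong) (simp add: patI_def)
  then show ?thesis
    by (cases s) (auto simp: typeI_def shapeI_def pairs_singletons reps_pairs patI_def)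
qed

lemma typeII_iff_shape: "typeII s \<longleftrightarrow> shapeIIa s \<or> shapeIIb s"
  by (cases s) (auto simp: typeII_def shapeIIa_def shapeIIb_def pairs_left reps_pairs)

lemma shapeIIIa_iff:
  "shapeIIIa s \<longleftrightarrow> (\<exists>w. s = w @ [2] \<and> w \<in> reps (pairs {1,2} {0}) 1)"
proof
  assume s: "shapeIIIa s"
  have "\<exists>w. s = [] @ w @ [2] \<and>
      fits (\<lambda>k. patIIIa (length s) (length ([] :: nat list) + k)) w"
    by (rule fits_between)
      (use s in \<open>auto simp: shapeIIIa_def patIIIa_def[abs_def] less_Suc_eq alt_def\<close>)
  with s show "(\<exists>w. s = w @ [2] \<and> w \<in> reps (pairs {1,2} {0}) 1)"
    by (auto simp: shapeIIIa_def reps_pairs patIIIa_def cong: fits_cong)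
qed (auto simp: shapeIIIa_def reps_pairs patIIIa_def cong: fits_cong)

lemma shapeIIIb_iff:
  "shapeIIIb s \<longleftrightarrow> (\<exists>w. s = 0 # w @ [2] \<and> w \<in> reps (pairs {1,2} {0}) 1)"
proof
  assume s: "shapeIIIb s"
  have "\<exists>w. s = [0] @ w @ [2] \<and>
      fits (\<lambda>k. patIIIb (length s) (length ([0] :: nat list) + k)) w"
    by (rule fits_between)
      (use s in \<open>auto simp: shapeIIIb_def patIIIb_def[abs_def] less_Suc_eq alt_def\<close>)
  with s show "(\<exists>w. s = 0 # w @ [2] \<and> w \<in> reps (pairs {1,2} {0}) 1)"
    by (auto simp: shapeIIIb_def reps_pairs patIIIb_def cong: fits_cong)
qed (auto simp: shapeIIIb_def reps_pairs patIIIb_def cong: fits_cong)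

lemma shapeIVa_iff:
  "shapeIVa s \<longleftrightarrow> 2 \<le> count2 s \<and> (\<exists>w. s = w @ [1,2] \<and> w \<in> reps (pairs {1,2} {0}) 1)"
proof
  assume s: "shapeIVa s"
  have "\<exists>w. s = [] @ w @ [1,2] \<and>
      fits (\<lambda>k. patIVa (length s) (length ([] :: nat list) + k)) w"
    by (rule fits_between)
      (use s in \<open>auto simp: shapeIVa_def patIVa_def[abs_def] less_Suc_eq alt_def\<close>)
  with s show "2 \<le> count2 s \<and> (\<exists>w. s = w @ [1,2] \<and> w \<in> reps (pairs {1,2} {0}) 1)"
    by (auto simp: shapeIVa_def reps_pairs patIVa_def cong: fits_cong)
qed (auto simp: shapeIVa_def reps_pairs patIVa_def cong: fits_cong)

lemma shapeIVb_iff: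
  "shapeIVb s \<longleftrightarrow> 2 \<le> count2 s \<and> (\<exists>w. s = w @ [0,1,2] \<and> w \<in> reps (pairs {0} {1,2}) 1)"
proof
  assume s: "shapeIVb s"
  have "\<exists>w. s = [] @ w @ [0,1,2] \<and>
      fits (\<lambda>k. patIVb (length s) (length ([] :: nat list) + k)) w"
    by (rule fits_between)
      (use s in \<open>auto simp: shapeIVb_def patIVb_def[abs_def] less_Suc_eq alt_def\<close>)
  with s show "2 \<le> count2 s \<and> (\<exists>w. s = w @ [0,1,2] \<and> w \<in> reps (pairs {0} {1,2}) 1)"
    by (auto simp: shapeIVb_def reps_pairs patIVb_def cong: fits_cong)
qed (auto simp: shapeIVb_def reps_pairs patIVb_def alt_def cong: fits_cong)

lemma shapeVa_iff:
  "shapeVa s \<longleftrightarrow> (\<exists>w. s = w @ [0,2,1,2] \<and> w \<in> reps (pairs {0} {1}) 0)"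
proof
  assume s: "shapeVa s"
  have "\<exists>w. s = [] @ w @ [0,2,1,2] \<and>
      fits (\<lambda>k. patVa (length s) (length ([] :: nat list) + k)) w"
    by (rule fits_between)
      (use s in \<open>auto simp: shapeVa_def patVa_def[abs_def] less_Suc_eq alt_def\<close>)
  with s show "(\<exists>w. s = w @ [0,2,1,2] \<and> w \<in> reps (pairs {0} {1}) 0)"
    by (auto simp: shapeVa_def reps_pairs patVa_def cong: fits_cong)
qed (auto simp: shapeVa_def reps_pairs patVa_def alt_def cong: fits_cong)

lemma shapeVb_iff:
  "shapeVb s \<longleftrightarrow> (\<exists>w. s = w @ [2,1,2] \<and> w \<in> reps (pairs {1} {0}) 1)"
proof
  assume s: "shapeVb s"
  have "\<exists>w. s = [] @ w @ [2,1,2] \<and>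
      fits (\<lambda>k. patVb (length s) (length ([] :: nat list) + k)) w"
    by (rule fits_between)
      (use s in \<open>auto simp: shapeVb_def patVb_def[abs_def] less_Suc_eq alt_def\<close>)
  with s show "(\<exists>w. s = w @ [2,1,2] \<and> w \<in> reps (pairs {1} {0}) 1)"
    by (auto simp: shapeVb_def reps_pairs patVb_def cong: fits_cong)
qed (auto simp: shapeVb_def reps_pairs patVb_def cong: fits_cong)

lemma shapeVIII_iff:
  "shapeVIII s \<longleftrightarrow> (\<exists>w. s = 1 # w @ [1,2] \<and> w \<in> reps (pairs {0} {2}) 1)"
proof
  assume s: "shapeVIII s"
  have "\<exists>w. s = [1] @ w @ [1,2] \<and>
      fits (\<lambda>k. patVIII (length s) (length ([1] :: nat list) + k)) w"
    by (rule fits_between)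
      (use s in \<open>auto simp: shapeVIII_def patVIII_def[abs_def] less_Suc_eq alt_def\<close>)
  with s show "(\<exists>w. s = 1 # w @ [1,2] \<and> w \<in> reps (pairs {0} {2}) 1)"
    by (auto simp: shapeVIII_def reps_pairs patVIII_def cong: fits_cong)
qed (auto simp: shapeVIII_def reps_pairs patVIII_def cong: fits_cong)

lemma shapeVI_iff:
  "shapeVI a b s \<longleftrightarrow>
    (\<exists>w\<in>reps (pairs {2} {b}) 1. \<exists>v\<in>reps (pairs {2} {b}) 0. s = a # w @ a # v @ [2])"
proof
  assume "shapeVI a b s"
  then obtain m where m: "odd m" "3 \<le> m" "odd (length s)" "m + 2 \<le> length s"
    and fits: "fits (patVI a b m) s"
    by (auto simp: shapeVI_def)
  have "\<exists>x. s = [a] @ x @ [2] \<and> fits (\<lambda>k. patVI a b m (length [a] + k)) x"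
    by (rule fits_between[OF fits]) (use m in \<open>auto simp: patVI_def alt_def\<close>)
  then obtain x where x: "s = a # x @ [2]" "fits (\<lambda>k. patVI a b m (Suc k)) x" by auto
  obtain w v where wv: "x = w @ a # v" "length w = m - 1"
      "fits (\<lambda>k. patVI a b m (Suc k)) w" "fits (\<lambda>k. patVI a b m (Suc (Suc (m - 1) + k))) v"
    by (rule fits_split_at[OF x(2), of "m - 1" a]) (use m x(1) in \<open>auto simp: patVI_def\<close>)
  have "fits (\<lambda>k. patVI a b m (Suc k)) w \<longleftrightarrow> fits (alt {2} {b}) w"
    by (rule fits_cong) (use wv(2) in \<open>auto simp: patVI_def\<close>)
  moreover have "fits (\<lambda>k. patVI a b m (Suc (Suc (m - 1) + k))) v \<longleftrightarrow> fits (alt {2} {b}) v"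
    by (rule fits_cong) (use m(1,2) in \<open>auto simp: patVI_def alt_def\<close>)
  ultimately have "fits (alt {2} {b}) w" "fits (alt {2} {b}) v" using wv(3,4) by simp_all
  moreover have "length v = length s - m - 2" using x(1) wv(1,2) m(2) by simp
  then have "even (length w)" "2 \<le> length w" "even (length v)"
    using wv(2) m by presburger+
  ultimately have "w \<in> reps (pairs {2} {b}) 1" "v \<in> reps (pairs {2} {b}) 0"
    by (simp_all add: reps_pairs)
  then show "\<exists>w\<in>reps (pairs {2} {b}) 1. \<exists>v\<in>reps (pairs {2} {b}) 0. s = a # w @ a # v @ [2]"
    using x(1) wv(1) by auto
next
  assume "\<exists>w\<in>reps (pairs {2} {b}) 1. \<exists>v\<in>reps (pairs {2} {b}) 0. s = a # w @ a # v @ [2]"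
  then obtain w v where wv: "even (length w)" "2 \<le> length w" "fits (alt {2} {b}) w"
      "even (length v)" "fits (alt {2} {b}) v" and s: "s = a # w @ a # v @ [2]"
    by (auto simp: reps_pairs)
  show "shapeVI a b s"
    unfolding shapeVI_def
  proof (rule bexI[where x = "Suc (length w)"])
    show "Suc (length w) \<in> set [0..<length s]" unfolding s set_upt by simp
  next
    from wv s show "odd (Suc (length w)) \<and> 3 \<le> Suc (length w) \<and> odd (length s) \<and>
        Suc (length w) + 2 \<le> length s \<and> fits (patVI a b (Suc (length w))) s"
      by (auto simp: patVI_def alt_add_even cong: fits_cong)
  qed
qed

lemma shapeVII_iff:
  "shapeVII s \<longleftrightarrow> (\<exists>w\<in>reps (pairs {0} {2}) 1. \<exists>v\<in>reps (pairs {0} {2}) 1. s = 1 # w @ 1 # v)"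
proof
  assume "shapeVII s"
  then obtain m where m: "odd m" "3 \<le> m" "even (length s)" "m + 3 \<le> length s"
    and fits: "fits (patVII m) s"
    by (auto simp: shapeVII_def)
  obtain u x where x: "s = u @ 1 # x" "length u = 0" "fits (\<lambda>k. patVII m (Suc 0 + k)) x"
    by (rule fits_split_at[OF fits, of 0 1]) (use m in \<open>auto simp: patVII_def\<close>)
  then have x: "s = 1 # x" "fits (\<lambda>k. patVII m (Suc k)) x" by simp_all
  obtain w v where wv: "x = w @ 1 # v" "length w = m - 1"
      "fits (\<lambda>k. patVII m (Suc k)) w" "fits (\<lambda>k. patVII m (Suc (Suc (m - 1) + k))) v"
    by (rule fits_split_at[OF x(2), of "m - 1" 1]) (use m x in \<open>auto simp: patVII_def\<close>)
  have "fits (\<lambda>k. patVII m (Suc k)) w \<longleftrightarrow> fits (alt {0} {2}) w"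
    by (rule fits_cong) (use wv(2) in \<open>auto simp: patVII_def\<close>)
  moreover have "fits (\<lambda>k. patVII m (Suc (Suc (m - 1) + k))) v \<longleftrightarrow> fits (alt {0} {2}) v"
    by (rule fits_cong) (use m(1,2) in \<open>auto simp: patVII_def alt_def\<close>)
  ultimately have "fits (alt {0} {2}) w" "fits (alt {0} {2}) v" using wv(3,4) by simp_all
  moreover have "length v = length s - m - 1" using x(1) wv(1,2) m(2) by simp
  then have "even (length w)" "2 \<le> length w" "even (length v)" "2 \<le> length v"
    using wv(2) m by presburger+
  ultimately have "w \<in> reps (pairs {0} {2}) 1" "v \<in> reps (pairs {0} {2}) 1"
    by (simp_all add: reps_pairs)
  then show "\<exists>w\<in>reps (pairs {0} {2}) 1. \<exists>v\<in>reps (pairs {0} {2}) 1. s = 1 # w @ 1 # v"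
    using x(1) wv(1) by auto
next
  assume "\<exists>w\<in>reps (pairs {0} {2}) 1. \<exists>v\<in>reps (pairs {0} {2}) 1. s = 1 # w @ 1 # v"
  then obtain w v where "even (length w)" "2 \<le> length w" "fits (alt {0} {2}) w"
      "even (length v)" "2 \<le> length v" "fits (alt {0} {2}) v" "s = 1 # w @ 1 # v"
    by (auto simp: reps_pairs)
  then show "shapeVII s"
    unfolding shapeVII_def
    by (intro bexI[of _ "Suc (length w)"]) (auto simp: patVII_def alt_add_even cong: fits_cong)
qed

definition bad_shape :: "nat list \<Rightarrow> bool" where
  "bad_shape s \<longleftrightarrow> shapeI s \<or> shapeIIa s \<or> shapeIIb s \<or> shapeIIIa s \<or> shapeIIIb s \<or>
     shapeIVa s \<or> shapeIVb s \<or> shapeVa s \<or> shapeVb s \<or> shapeVI 1 0 s \<or> shapeVI 0 1 s \<or>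
     shapeVII s \<or> shapeVIII s \<or> s \<in> set exceptional_strings"

lemma bad_iff_bad_shape:
  "bad s \<longleftrightarrow> normalized s \<and> fully_ternary s \<and> s \<noteq> [] \<and> last s = 2 \<and> bad_shape s"
proof -
  have "typeIII s \<longleftrightarrow> shapeIIIa s \<or> shapeIIIb s"
    by (auto simp: typeIII_def shapeIIIa_iff shapeIIIb_iff pairs_left)
  moreover have "typeIV s \<longleftrightarrow> shapeIVa s \<or> shapeIVb s"
    by (auto simp: typeIV_def shapeIVa_iff shapeIVb_iff pairs_left pairs_right)
  moreover have "typeV s \<longleftrightarrow> shapeVa s \<or> shapeVb s"
    by (auto simp: typeV_def shapeVa_iff shapeVb_iff pairs_singletons)
  moreover have "typeVI s \<longleftrightarrow> shapeVI 1 0 s \<or> shapeVI 0 1 s"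
    by (simp add: typeVI_def shapeVI_iff pairs_singletons)
  moreover have "typeVII s \<longleftrightarrow> shapeVII s"
    by (simp add: typeVII_def shapeVII_iff pairs_singletons)
  moreover have "typeVIII s \<longleftrightarrow> shapeVIII s"
    by (auto simp: typeVIII_def shapeVIII_iff pairs_singletons)
  ultimately show ?thesis
    by (auto simp: bad_def bad_shape_def typeI_iff_shape typeII_iff_shape typeIX_def)
qed

section \<open>Shrinking keeps bad strings bad\<close>

lemma fits_shrink:
  assumes "fits F s" "1 \<le> i" "i < length s"
    "\<And>j k. j + k + 1 = i \<Longrightarrow> 1 \<le> j \<Longrightarrow> F j \<subseteq> G k"
    "\<And>k. i \<le> k + 1 \<Longrightarrow> k + 2 \<le> length s \<Longrightarrow> F (k + 1) \<subseteq> G k"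
  shows "fits G (shrink i s)"
  unfolding fits_iff_nth
proof (intro allI impI)
  fix k assume "k < length (shrink i s)"
  then have k: "k < length s - 1" by simp
  show "shrink i s ! k \<in> G k"
  proof (cases "k < i - 1")
    case True
    then have "s ! (i - 1 - k) \<in> F (i - 1 - k)" using assms(3) fitsD[OF assms(1)] by simp
    moreover have "F (i - 1 - k) \<subseteq> G k" using True by (intro assms(4)) auto
    ultimately show ?thesis using True nth_shrink[OF assms(3) k] by auto
  next
    case False
    then have "s ! (k + 1) \<in> F (k + 1)" using k fitsD[OF assms(1)] by simp
    moreover have "F (k + 1) \<subseteq> G k" using False k by (intro assms(5)) auto
    ultimately show ?thesis using False nth_shrink[OF assms(3) k] by auto
  qed
qed

lemma fits_merge: "fits F s \<Longrightarrow> i < length s \<Longrightarrow> s ! i = s ! 0 \<Longrightarrow> s ! 0 \<in> F 0 \<inter> F i"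
  using fitsD[of F s 0] fitsD[of F s i] by (cases s) auto

lemma count2_prefix_reversal: "count2 (prefix_reversal i s) = count2 s"
  by (metis count2_def append_take_drop_id filter_append length_append length_rev
      prefix_reversal_def rev_filter add.commute)

lemma count2_shrink: "s ! 0 \<noteq> 2 \<Longrightarrow> count2 (shrink i s) = count2 s"
proof -
  have "count2 (shrink i s) = count2 (tl s)" by (simp add: shrink_def count2_prefix_reversal)
  then show "s ! 0 \<noteq> 2 \<Longrightarrow> count2 (shrink i s) = count2 s" by (cases s) (simp_all add: count2_def)
qed

lemma two_le_count2:
  assumes "p \<noteq> q" "p < length s" "q < length s" "s ! p = 2" "s ! q = 2"
  shows "2 \<le> count2 s"
proof -
  have "{p, q} \<subseteq> {k. k < length s \<and> s ! k = 2}" using assms(2-5) by auto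
  then have "card {p, q} \<le> card {k. k < length s \<and> s ! k = 2}" by (intro card_mono) auto
  then show ?thesis using assms(1) by (simp add: count2_def length_filter_conv_card)
qed

lemma shapeIIa_shrink:
  assumes "shapeIIa s" "1 \<le> i" "i < length s" "s ! i = s ! 0" "4 \<le> length s"
  shows "shapeIIb (shrink i s)"
proof -
  have s: "fits (alt {0,1} {2}) s" "even (length s)" using assms(1) by (auto simp: shapeIIa_def)
  have "even i" using fits_merge[OF s(1) assms(3,4)] by (auto simp: alt_def split: if_splits)
  then have "fits (alt {2} {0,1}) (shrink i s)"
    by (intro fits_shrink[OF s(1) assms(2,3)]) (auto simp: alt_def)
  then show ?thesis using s assms(2,3,5) \<open>even i\<close> by (auto simp: shapeIIb_def)
qed

lemma shapeIIb_shrink: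
  assumes "shapeIIb s" "1 \<le> i" "i < length s" "s ! i = s ! 0" "4 \<le> length s"
  shows "shapeIIa (shrink i s)"
proof -
  have s: "fits (alt {2} {0,1}) s" "odd (length s)" using assms(1) by (auto simp: shapeIIb_def)
  have "even i" using fits_merge[OF s(1) assms(3,4)] by (auto simp: alt_def split: if_splits)
  then have "fits (alt {0,1} {2}) (shrink i s)"
    by (intro fits_shrink[OF s(1) assms(2,3)]) (auto simp: alt_def)
  then show ?thesis using s assms(2,3,5) \<open>even i\<close> by (auto simp: shapeIIa_def)
qed

lemma shapeIIIa_shrink:
  assumes "shapeIIIa s" "1 \<le> i" "i < length s" "s ! i = s ! 0" "4 \<le> length s"
  shows "shapeIIIb (shrink i s)"
proof -
  obtain q where q: "length s = Suc q" using assms(3) by (cases s) auto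
  have s: "fits (patIIIa (Suc q)) s" "even q" "4 \<le> q"
    using assms(1,5) q by (auto simp: shapeIIIa_def)
  have "even i \<or> i = q"
    using fits_merge[OF s(1) assms(3,4)] s(3) by (auto simp: patIIIa_def alt_def split: if_splits)
  then have "fits (patIIIb q) (shrink i s)"
    by (intro fits_shrink[OF s(1) assms(2,3)])
      (use s(2,3) q assms(3) in \<open>auto simp: patIIIa_def patIIIb_def alt_def\<close>)
  then show ?thesis using s q by (auto simp: shapeIIIb_def)
qed

lemma shapeIIIb_shrink:
  assumes "shapeIIIb s" "1 \<le> i" "i < length s" "s ! i = s ! 0" "4 \<le> length s"
  shows "shapeIIIa (shrink i s)"
proof -
  obtain q where q: "length s = Suc q" using assms(3) by (cases s) auto
  have s: "fits (patIIIb (Suc q)) s" "odd q" "3 \<le> q"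
    using assms(1,5) q by (auto simp: shapeIIIb_def)
  have "even i" "i \<noteq> q"
    using fits_merge[OF s(1) assms(3,4)] s(3) by (auto simp: patIIIb_def alt_def split: if_splits)
  then have "fits (patIIIa q) (shrink i s)"
    by (intro fits_shrink[OF s(1) assms(2,3)])
      (use s(2,3) q assms(3) in \<open>auto simp: patIIIa_def patIIIb_def alt_def\<close>)
  then show ?thesis using s q by (auto simp: shapeIIIa_def)
qed

lemma shapeIVa_shrink:
  assumes "shapeIVa s" "1 \<le> i" "i < length s" "s ! i = s ! 0" "4 \<le> length s"
  shows "shapeIIIa (shrink i s) \<or> shapeIVb (shrink i s)"
proof -
  obtain q where q: "length s = Suc q" using assms(3) by (cases s) auto
  have s: "fits (patIVa (Suc q)) s" "odd q" "3 \<le> q" "2 \<le> count2 s"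
    using assms(1,5) q by (auto simp: shapeIVa_def)
  have i: "even i \<and> i + 1 \<le> q \<or> i = q \<and> s ! 0 = 2"
    using fits_merge[OF s(1) assms(3,4)] assms(3) s(2,3) q
    by (auto simp: patIVa_def alt_def split: if_splits)
  show ?thesis
  proof (cases "i = q")
    case True
    then have "fits (patIIIa q) (shrink i s)"
      by (intro fits_shrink[OF s(1) assms(2,3)])
        (use s(2,3) q in \<open>auto simp: patIVa_def patIIIa_def alt_def\<close>)
    then show ?thesis using s q by (auto simp: shapeIIIa_def)
  next
    case False
    with i have i: "even i" "i + 1 \<le> q" by auto
    have fits: "fits (patIVb q) (shrink i s)"
      by (intro fits_shrink[OF s(1) assms(2,3)])
        (use i s(2,3) q in \<open>auto simp: patIVa_def patIVb_def alt_def\<close>)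
    have count: "2 \<le> count2 (shrink i s)"
    proof (cases "s ! 0 = 2")
      case False
      then show ?thesis using count2_shrink s(4) by simp
    next
      case True
      have "s ! q = 2" using fitsD[OF s(1), of q] q by (simp add: patIVa_def)
      moreover have "shrink i s ! (i - 1) = s ! i" "shrink i s ! (q - 1) = s ! q"
        using nth_shrink[OF assms(3)] i q assms(2) by auto
      ultimately show ?thesis
        using two_le_count2[of "i - 1" "q - 1" "shrink i s"] True assms(2,4) i q by auto
    qed
    have "q \<noteq> 3"
    proof
      assume "q = 3"
      then have "length (shrink i s) = 3" using q by simp
      then obtain x y z where "shrink i s = [x, y, z]"
        by (auto simp del: length_shrink simp: numeral_3_eq_3 length_Suc_conv)
      with fits count \<open>q = 3\<close> show False by (simp add: patIVb_def count2_def)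
    qed
    then have "5 \<le> q" using s(2,3) by presburger
    then show ?thesis using fits count q s(2) by (auto simp: shapeIVb_def)
  qed
qed

lemma shapeIVb_shrink:
  assumes "shapeIVb s" "1 \<le> i" "i < length s" "s ! i = s ! 0" "4 \<le> length s"
  shows "shapeIVa (shrink i s)"
proof -
  obtain q where q: "length s = Suc q" using assms(3) by (cases s) auto
  have s: "fits (patIVb (Suc q)) s" "even q" "4 \<le> q" "2 \<le> count2 s"
    using assms(1,5) q by (auto simp: shapeIVb_def)
  have i: "even i" "i + 2 \<le> q" "s ! 0 = 0"
    using fits_merge[OF s(1) assms(3,4)] assms(3) s(2,3) q
    by (auto simp: patIVb_def alt_def split: if_splits)
  have "fits (patIVa q) (shrink i s)"
    by (intro fits_shrink[OF s(1) assms(2,3)])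
      (use i s(2,3) q in \<open>auto simp: patIVa_def patIVb_def alt_def\<close>)
  moreover have "2 \<le> count2 (shrink i s)" using count2_shrink i(3) s(4) by simp
  ultimately show ?thesis using s q by (auto simp: shapeIVa_def)
qed

lemma shapeVa_shrink:
  assumes "shapeVa s" "1 \<le> i" "i < length s" "s ! i = s ! 0" "4 \<le> length s"
  shows "shapeVb (shrink i s)"
proof -
  obtain q where q: "length s = Suc q" using assms(3) by (cases s) auto
  have s: "fits (patVa (Suc q)) s" "odd q" "3 \<le> q" using assms(1,5) q by (auto simp: shapeVa_def)
  have i: "even i" "i + 3 \<le> q"
    using fits_merge[OF s(1) assms(3,4)] assms(3) s q
    by (auto simp: patVa_def alt_def split: if_splits)
  then have "fits (patVb q) (shrink i s)"
    by (intro fits_shrink[OF s(1) assms(2,3)])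
      (use s(2,3) q in \<open>auto simp: patVa_def patVb_def alt_def\<close>)
  moreover have "5 \<le> q" using i assms(2) s(2) by presburger
  ultimately show ?thesis using s q by (auto simp: shapeVb_def)
qed

lemma shapeVb_shrink:
  assumes "shapeVb s" "1 \<le> i" "i < length s" "s ! i = s ! 0" "4 \<le> length s"
  shows "shapeIVa (shrink i s) \<or> shapeVa (shrink i s)"
proof -
  obtain q where q: "length s = Suc q" using assms(3) by (cases s) auto
  have s: "fits (patVb (Suc q)) s" "even q" "4 \<le> q" using assms(1,5) q by (auto simp: shapeVb_def)
  have i: "even i \<and> i + 4 \<le> q \<or> i + 1 = q"
    using fits_merge[OF s(1) assms(3,4)] assms(3) s(2,3) q
    by (auto simp: patVb_def alt_def split: if_splits; presburger)
  show ?thesis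
  proof (cases "i + 1 = q")
    case True
    have fits: "fits (patIVa q) (shrink i s)"
      by (intro fits_shrink[OF s(1) assms(2,3)])
        (use True s(2,3) q in \<open>auto simp: patIVa_def patVb_def alt_def\<close>)
    define p where "p = q - 2"
    have p: "q = p + 2" using s(3) by (simp add: p_def)
    have "s ! q = 2" "s ! p = 2"
      using fitsD[OF s(1), of q] fitsD[OF s(1), of p] q p by (simp_all add: patVb_def)
    moreover have "shrink i s ! 0 = s ! p" "shrink i s ! (q - 1) = s ! q"
      using nth_shrink[OF assms(3)] True q p s(3) by auto
    ultimately have "2 \<le> count2 (shrink i s)"
      using two_le_count2[of 0 "q - 1" "shrink i s"] q s(3) by auto
    then show ?thesis using fits q s(2,3) by (auto simp: shapeIVa_def)
  next
    case False
    with i have "even i" "i + 4 \<le> q" by auto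
    then have "fits (patVa q) (shrink i s)"
      by (intro fits_shrink[OF s(1) assms(2,3)])
        (use s(2,3) q in \<open>auto simp: patVa_def patVb_def alt_def\<close>)
    then show ?thesis using q s(2,3) by (auto simp: shapeVa_def)
  qed
qed

lemma shapeVI_shrink:
  assumes "shapeVI a b s" "1 \<le> i" "i < length s" "s ! i = s ! 0" "a \<in> {0,1}" "b \<in> {0,1}" "a \<noteq> b"
  shows "shapeIIa (shrink i s)"
proof -
  obtain m where m: "odd m" "3 \<le> m" "odd (length s)" "m + 2 \<le> length s"
    and s: "fits (patVI a b m) s"
    using assms(1) by (auto simp: shapeVI_def)
  have "i = m"
    using fits_merge[OF s assms(3,4)] assms(2,5-7)
    by (auto simp: patVI_def alt_def split: if_splits)
  then have "fits (alt {0,1} {2}) (shrink i s)"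
    by (intro fits_shrink[OF s assms(2,3)]) (use m assms(5,6) in \<open>auto simp: patVI_def alt_def\<close>)
  then show ?thesis using m assms(3) by (auto simp: shapeIIa_def)
qed

lemma shapeVII_shrink:
  assumes "shapeVII s" "1 \<le> i" "i < length s" "s ! i = s ! 0"
  shows "shapeIIIa (shrink i s)"
proof -
  obtain m where m: "odd m" "3 \<le> m" "even (length s)" "m + 3 \<le> length s"
    and s: "fits (patVII m) s"
    using assms(1) by (auto simp: shapeVII_def)
  obtain q where q: "length s = Suc q" using assms(3) by (cases s) auto
  have "i = m"
    using fits_merge[OF s assms(3,4)] assms(2) by (auto simp: patVII_def alt_def split: if_splits)
  then have "fits (patIIIa q) (shrink i s)"
    by (intro fits_shrink[OF s assms(2,3)])
      (use m q in \<open>auto simp: patVII_def patIIIa_def alt_def\<close>)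
  then show ?thesis using m q by (auto simp: shapeIIIa_def)
qed

lemma shapeVIII_shrink:
  assumes "shapeVIII s" "1 \<le> i" "i < length s" "s ! i = s ! 0" "4 \<le> length s"
  shows "shapeIVa (shrink i s)"
proof -
  obtain q where q: "length s = Suc q" using assms(3) by (cases s) auto
  have s: "fits (patVIII (Suc q)) s" "even q" "4 \<le> q"
    using assms(1,5) q by (auto simp: shapeVIII_def)
  have i: "i + 1 = q"
    using fits_merge[OF s(1) assms(3,4)] assms(2,3) s(2,3) q
    by (auto simp: patVIII_def alt_def split: if_splits)
  have fits: "fits (patIVa q) (shrink i s)"
    by (intro fits_shrink[OF s(1) assms(2,3)])
      (use i s(2,3) q in \<open>auto simp: patIVa_def patVIII_def alt_def\<close>)
  define p where "p = q - 2"
  have p: "q = p + 2" using s(3) by (simp add: p_def)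
  have "s ! q = 2" "s ! p = 2"
    using fitsD[OF s(1), of q] fitsD[OF s(1), of p] q p s(2,3)
    by (simp_all add: patVIII_def alt_def)
  moreover have "shrink i s ! 0 = s ! p" "shrink i s ! (q - 1) = s ! q"
    using nth_shrink[OF assms(3)] i q p s(3) by auto
  ultimately have "2 \<le> count2 (shrink i s)"
    using two_le_count2[of 0 "q - 1" "shrink i s"] q s(3) by auto
  then show ?thesis using fits q s(2,3) by (auto simp: shapeIVa_def)
qed

definition shrinks :: "nat list \<Rightarrow> nat list list" where
  "shrinks s = [shrink i s. i \<leftarrow> [1..<length s], s ! i = s ! 0]"

lemma shrink_in_shrinks:
  "1 \<le> i \<Longrightarrow> i < length s \<Longrightarrow> s ! i = s ! 0 \<Longrightarrow> shrink i s \<in> set (shrinks s)"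
  by (auto simp: shrinks_def)

lemma bad_shape_shrinks_exceptional: "list_all bad_shape (concat (map shrinks exceptional_strings))"
  by code_simp

lemma bad_shape_shrink:
  assumes "bad_shape s" "1 \<le> i" "i < length s" "s ! i = s ! 0" "4 \<le> length s"
  shows "bad_shape (shrink i s)"
proof -
  have "\<not> shapeI s"
    using fits_merge[of patI s i] assms(2-4) by (auto simp: shapeI_def patI_def alt_def)
  moreover have "s \<in> set exceptional_strings \<Longrightarrow> bad_shape (shrink i s)"
    using bad_shape_shrinks_exceptional shrink_in_shrinks[OF assms(2-4)]
    by (auto simp: list_all_iff)
  moreover note shapeIIa_shrink[OF _ assms(2-5)] shapeIIb_shrink[OF _ assms(2-5)]
    shapeIIIa_shrink[OF _ assms(2-5)] shapeIIIb_shrink[OF _ assms(2-5)]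
    shapeIVa_shrink[OF _ assms(2-5)] shapeIVb_shrink[OF _ assms(2-5)]
    shapeVa_shrink[OF _ assms(2-5)] shapeVb_shrink[OF _ assms(2-5)]
    shapeVI_shrink[OF _ assms(2-4), of 1 0] shapeVI_shrink[OF _ assms(2-4), of 0 1]
    shapeVII_shrink[OF _ assms(2-4)] shapeVIII_shrink[OF _ assms(2-5)]
  ultimately show ?thesis
    using assms(1) unfolding bad_shape_def by auto
qed

lemma bad_shrink:
  assumes "bad s" "1 \<le> i" "i < length s" "s ! i = s ! 0" "4 \<le> length s"
  shows "bad (shrink i s)"
proof -
  have s: "normalized s" "fully_ternary s" "last s = 2" "bad_shape s"
    using assms(1) by (auto simp: bad_iff_bad_shape)
  have "shrink i s \<noteq> []"
  proof
    assume "shrink i s = []"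
    then have "length (shrink i s) = 0" by simp
    with assms(5) show False by simp
  qed
  then show ?thesis
    using shrink_invariants[OF s(1-3) assms(2-4)] bad_shape_shrink[OF s(4) assms(2-5)]
    by (auto simp: bad_iff_bad_shape)
qed

section \<open>The lower bound\<close>

lemma length_le_of_sorts_in: "normalized s \<Longrightarrow> sorts_in k s \<Longrightarrow> length s \<le> k + 3"
proof (induction k arbitrary: s)
  case (Suc k)
  then obtain i where i: "1 \<le> i" "i \<le> length s" "sorts_in k (flip i s)"
    by (auto simp: sorts_in_Suc_iff)
  then have "length (flip i s) \<le> k + 3" using Suc.IH normalized_flip by blast
  then show ?case using length_flip[OF Suc.prems(1) i(1,2)] by (simp split: if_splits)
qed simp

lemma not_bad_shape_sorted: "\<not> bad_shape [0,1,2]"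
  by code_simp

lemma length_le_of_bad_sorts_in: "bad s \<Longrightarrow> sorts_in k s \<Longrightarrow> length s \<le> k + 2"
proof (induction k arbitrary: s)
  case 0
  then show ?case using not_bad_shape_sorted by (auto simp: bad_iff_bad_shape)
next
  case (Suc k)
  then obtain i where i: "1 \<le> i" "i \<le> length s" "sorts_in k (flip i s)"
    by (auto simp: sorts_in_Suc_iff)
  have s: "normalized s" using Suc.prems(1) by (simp add: bad_def)
  show ?case
  proof (cases "i < length s \<and> s ! i = s ! 0 \<and> 4 \<le> length s")
    case True
    then have "bad (shrink i s)" "sorts_in k (shrink i s)"
      using bad_shrink[OF Suc.prems(1) i(1)] i(3) flip_normalized[OF s i(1,2)] by simp_all
    then have "length (shrink i s) \<le> k + 2" by (rule Suc.IH)
    then show ?thesis by simp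
  next
    case False
    have "length (flip i s) \<le> k + 3" using length_le_of_sorts_in normalized_flip i(3) by blast
    then show ?thesis using False length_flip[OF s i(1,2)] by (auto split: if_splits)
  qed
qed

theorem lemma4p5:
  fixes s :: "nat list" and n :: nat
  assumes "bad s"
    and "s \<noteq> [0,2,1,2]"
    and "length s = n"
  shows "sorting_distance s = n - 2"
proof -
  have s: "normalized s" "fully_ternary s" "last s = 2" using assms(1) by (auto simp: bad_def)
  have sorts: "sorts_in (n - 2) s" using sorts_in_length_minus_2[OF s assms(2)] assms(3) by simp
  then have "sorting_distance s \<le> n - 2"
    unfolding sorting_distance_def sorts_in_def by (rule Least_le)
  moreover have "sorts_in (sorting_distance s) s"
    using sorts unfolding sorting_distance_def sorts_in_def by (rule LeastI)
  then have "n \<le> sorting_distance s + 2"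
    using length_le_of_bad_sorts_in[OF assms(1)] assms(3) by blast
  ultimately show ?thesis by simp
qed

end
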